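(* Let $k$ be a field and $r$ a positive integer. The free metabelian Lie algebra $F_r$ over $k$ is equationally Noetherian: for every $n\in\mathbb{N}$ and every system $S\subseteq F_r[x_1,\dots,x_n]$ there exists a finite subsystem $S_0\subseteq S$ with $V_{F_r}(S)=V_{F_r}(S_0)$.
   Context: $F_r[X]=F_r\ast F(X)$ is the free product of $F_r$ with the free Lie $k$-algebra on $X=\{x_1,\dots,x_n\}$ (the free $F_r$-algebra on $X$). For $S\subseteq F_r[X]$, $V_{F_r}(S)=\{p\in F_r^n: f(p)=0\ \forall f\in S\}$. *)

theory Defs
  imports Main
begin

text \<open>Formal Lie expressions over a field 'k: generators a_i (of F_r), variables x_j,
  zero, sum, scalar multiple and bracket.\<close>
datatype 'k lterm =
    Gen nat
  | Var nat
  | LZero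
  | LAdd "'k lterm" "'k lterm"
  | LSmul 'k "'k lterm"
  | LBr "'k lterm" "'k lterm"

fun gens :: "'k lterm \<Rightarrow> nat set" where
  "gens (Gen i) = {i}"
| "gens (Var j) = {}"
| "gens LZero = {}"
| "gens (LAdd a b) = gens a \<union> gens b"
| "gens (LSmul c a) = gens a"
| "gens (LBr a b) = gens a \<union> gens b"

fun vars :: "'k lterm \<Rightarrow> nat set" where
  "vars (Gen i) = {}"
| "vars (Var j) = {j}"
| "vars LZero = {}"
| "vars (LAdd a b) = vars a \<union> vars b"
| "vars (LSmul c a) = vars a"
| "vars (LBr a b) = vars a \<union> vars b"

fun subst :: "(nat \<Rightarrow> 'k lterm) \<Rightarrow> 'k lterm \<Rightarrow> 'k lterm" where
  "subst p (Gen i) = Gen i"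
| "subst p (Var j) = p j"
| "subst p LZero = LZero"
| "subst p (LAdd a b) = LAdd (subst p a) (subst p b)"
| "subst p (LSmul c a) = LSmul c (subst p a)"
| "subst p (LBr a b) = LBr (subst p a) (subst p b)"

inductive meq :: "'k::field lterm \<Rightarrow> 'k lterm \<Rightarrow> bool" where
  refl: "meq a a"
| sym: "meq a b \<Longrightarrow> meq b a"
| trans: "meq a b \<Longrightarrow> meq b c \<Longrightarrow> meq a c"
| cong_add: "meq a a' \<Longrightarrow> meq b b' \<Longrightarrow> meq (LAdd a b) (LAdd a' b')"
| cong_smul: "meq a a' \<Longrightarrow> meq (LSmul c a) (LSmul c a')"
| cong_br: "meq a a' \<Longrightarrow> meq b b' \<Longrightarrow> meq (LBr a b) (LBr a' b')"
| add_assoc: "meq (LAdd (LAdd a b) c) (LAdd a (LAdd b c))"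
| add_comm: "meq (LAdd a b) (LAdd b a)"
| add_zero: "meq (LAdd a LZero) a"
| add_neg: "meq (LAdd a (LSmul (-1) a)) LZero"
| smul_add: "meq (LSmul c (LAdd a b)) (LAdd (LSmul c a) (LSmul c b))"
| add_smul: "meq (LSmul (c + d) a) (LAdd (LSmul c a) (LSmul d a))"
| smul_smul: "meq (LSmul c (LSmul d a)) (LSmul (c * d) a)"
| smul_one: "meq (LSmul 1 a) a"
| br_add_left: "meq (LBr (LAdd a b) c) (LAdd (LBr a c) (LBr b c))"
| br_add_right: "meq (LBr a (LAdd b c)) (LAdd (LBr a b) (LBr a c))"
| br_smul_left: "meq (LBr (LSmul c a) b) (LSmul c (LBr a b))"
| br_smul_right: "meq (LBr a (LSmul c b)) (LSmul c (LBr a b))"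
| br_alt: "meq (LBr a a) LZero"
| jacobi: "meq (LAdd (LAdd (LBr a (LBr b c)) (LBr b (LBr c a))) (LBr c (LBr a b))) LZero"
| metabelian: "meq (LBr (LBr a b) (LBr c d)) LZero"

definition Fr_elem :: "nat \<Rightarrow> 'k lterm \<Rightarrow> bool" where
  "Fr_elem r t \<longleftrightarrow> vars t = {} \<and> gens t \<subseteq> {..<r}"

definition FrX_elem :: "nat \<Rightarrow> nat \<Rightarrow> 'k lterm \<Rightarrow> bool" where
  "FrX_elem r n t \<longleftrightarrow> vars t \<subseteq> {..<n} \<and> gens t \<subseteq> {..<r}"

text \<open>Points of F_r^n (tuples of representatives, padded by LZero) and the zero set V_{F_r}(S).\<close>
definition Vset :: "nat \<Rightarrow> nat \<Rightarrow> 'k::field lterm set \<Rightarrow> (nat \<Rightarrow> 'k lterm) set" where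
  "Vset r n S = {p. (\<forall>j<n. Fr_elem r (p j)) \<and> (\<forall>j\<ge>n. p j = LZero)
                   \<and> (\<forall>f\<in>S. meq (subst p f) LZero)}"

end

theory Submission
  imports Defs "HOL-Library.List_Lenlexorder" "HOL.Vector_Spaces" "HOL.Topological_Spaces"
begin

text \<open>
The zero set of \<open>S\<close> depends only on the ideal that \<open>S\<close> generates in the metabelian Lie
algebra generated by \<open>a\<^sub>1, \<dots>, a\<^sub>r, x\<^sub>1, \<dots>, x\<^sub>n\<close>, so it suffices that ideals of a
finitely generated metabelian Lie algebra \<open>M\<close> with generators \<open>g\<^sub>0, \<dots>, g\<^sub>m\<^sub>-\<^sub>1\<close> satisfy
the ascending chain condition. As \<open>[M,M]\<close> is abelian, the Jacobi identity makes the operators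
\<open>ad g\<^sub>l\<close> commute on \<open>[M,M]\<close>, so \<open>M\<close> is spanned by the \<open>g\<^sub>i\<close> and the monomials
\<open>ad(g\<^sub>0)\<^bsup>e\<^sub>0\<^esup> \<cdots> ad(g\<^sub>m\<^sub>-\<^sub>1)\<^bsup>e\<^sub>m\<^sub>-\<^sub>1\<^esup> [g\<^sub>i, g\<^sub>j]\<close>. These need not be linearly
independent; instead, for an ideal \<open>I\<close> consider the linear space of all coefficient vectors
over the monomials that represent elements of \<open>I\<close>. Because \<open>I\<close> is closed under \<open>ad g\<^sub>l\<close>,
which raises \<open>e\<^sub>l\<close>, its set of leading monomials (for a well-order) is closed upwards in the
componentwise order on exponents. By Gaussian elimination, a strictly ascending chain of
ideals yields a strictly ascending chain of such sets of leading monomials, which Dickson's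
lemma rules out.
\<close>

section \<open>The free metabelian Lie algebra\<close>

quotient_type (overloaded) 'k mla = "'k::field lterm" / meq
  by (rule equivpI) (auto simp: reflp_def symp_def transp_def intro: meq.intros)

instantiation mla :: (field) ab_group_add
begin
lift_definition zero_mla :: "'a mla" is LZero .
lift_definition plus_mla :: "'a mla \<Rightarrow> 'a mla \<Rightarrow> 'a mla" is LAdd by (rule meq.cong_add)
lift_definition uminus_mla :: "'a mla \<Rightarrow> 'a mla" is "LSmul (-1)" by (rule meq.cong_smul)
lift_definition minus_mla :: "'a mla \<Rightarrow> 'a mla \<Rightarrow> 'a mla" is "\<lambda>a b. LAdd a (LSmul (-1) b)"
  by (intro meq.cong_add meq.cong_smul)
instance proof
  fix a b c :: "'a mla"
  show "a + b + c = a + (b + c)" by transfer (rule meq.add_assoc)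
  show "a + b = b + a" by transfer (rule meq.add_comm)
  show "0 + a = a" by transfer (meson meq.add_comm meq.add_zero meq.trans)
  show "- a + a = 0" by transfer (meson meq.add_comm meq.add_neg meq.trans)
  show "a - b = a + - b" by transfer (rule meq.refl)
qed
end

lift_definition mscale :: "'k::field \<Rightarrow> 'k mla \<Rightarrow> 'k mla" is LSmul by (rule meq.cong_smul)
lift_definition mbr :: "'k::field mla \<Rightarrow> 'k mla \<Rightarrow> 'k mla" is LBr by (rule meq.cong_br)

interpretation mla: vector_space mscale
  by unfold_locales
    (transfer, rule meq.smul_add meq.add_smul meq.smul_smul meq.smul_one)+

lemma mbr_add_left: "mbr (x + y) z = mbr x z + mbr y z" by transfer (rule meq.br_add_left)
lemma mbr_add_right: "mbr x (y + z) = mbr x y + mbr x z" by transfer (rule meq.br_add_right)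
lemma mbr_scale_left: "mbr (mscale c x) y = mscale c (mbr x y)" by transfer (rule meq.br_smul_left)
lemma mbr_scale_right: "mbr x (mscale c y) = mscale c (mbr x y)" by transfer (rule meq.br_smul_right)
lemma mbr_self: "mbr x x = 0" by transfer (rule meq.br_alt)
lemma mbr_jacobi: "mbr x (mbr y z) + mbr y (mbr z x) + mbr z (mbr x y) = 0"
  by transfer (rule meq.jacobi)
lemma mbr_mbr_mbr: "mbr (mbr a b) (mbr c d) = 0" by transfer (rule meq.metabelian)

lemma mbr_zero_left [simp]: "mbr 0 y = 0"
  using mbr_add_left[of 0 0 y] by simp

lemma mbr_zero_right [simp]: "mbr y 0 = 0"
  using mbr_add_right[of y 0 0] by simp

lemma mbr_antisym: "mbr x y = - mbr y x"
proof -
  have "mbr x x + mbr y x + (mbr x y + mbr y y) = 0"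
    using mbr_self[of "x + y"] by (simp add: mbr_add_left mbr_add_right)
  then show ?thesis by (simp add: mbr_self add.commute eq_neg_iff_add_eq_0)
qed

lemma mbr_neg_right [simp]: "mbr x (- y) = - mbr x y"
  using mbr_add_right[of x "- y" y] by (simp add: eq_neg_iff_add_eq_0)

lemma mbr_sum_right: "mbr x (sum f A) = (\<Sum>a\<in>A. mbr x (f a))"
  by (induction A rule: infinite_finite_induct) (auto simp: mbr_add_right)

lemma mbr_sum_left: "mbr (sum f A) x = (\<Sum>a\<in>A. mbr (f a) x)"
  by (induction A rule: infinite_finite_induct) (auto simp: mbr_add_left)

definition is_bracket :: "'k::field mla \<Rightarrow> bool" where
  "is_bracket z \<longleftrightarrow> (\<exists>u v. z = mbr u v)"

lemma is_bracket_mbr [simp]: "is_bracket (mbr x y)"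
  unfolding is_bracket_def by blast

lemma mbr_commute_on_bracket:
  assumes "is_bracket w"
  shows "mbr x (mbr y w) = mbr y (mbr x w)"
proof -
  obtain u v where w: "w = mbr u v" using assms unfolding is_bracket_def by blast
  have "mbr x (mbr y w) + mbr y (mbr w x) + mbr w (mbr x y) = 0" by (rule mbr_jacobi)
  then show ?thesis by (simp add: w mbr_mbr_mbr mbr_antisym[of "mbr u v" x])
qed

lift_definition msubst :: "(nat \<Rightarrow> 'k::field lterm) \<Rightarrow> 'k mla \<Rightarrow> 'k mla" is subst
proof -
  show "meq (subst p a) (subst p b)" if "meq a b" for p and a b :: "'k lterm"
    using that by (induction rule: meq.induct) (auto intro: meq.intros)
qed

lemma msubst_add [simp]: "msubst p (x + y) = msubst p x + msubst p y"
  by transfer (simp add: meq.refl)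
lemma msubst_scale [simp]: "msubst p (mscale c x) = mscale c (msubst p x)"
  by transfer (simp add: meq.refl)
lemma msubst_mbr [simp]: "msubst p (mbr x y) = mbr (msubst p x) (msubst p y)"
  by transfer (simp add: meq.refl)
lemma msubst_zero [simp]: "msubst p 0 = 0"
  by transfer (simp add: meq.refl)

lemma msubst_abs_eq_0_iff: "msubst p (abs_mla t) = 0 \<longleftrightarrow> meq (subst p t) LZero"
  by (simp add: msubst.abs_eq zero_mla.abs_eq mla.abs_eq_iff)

section \<open>Dickson's lemma\<close>

lemma nat_seq_incseq_subseq:
  fixes h :: "nat \<Rightarrow> nat"
  shows "\<exists>\<sigma>::nat\<Rightarrow>nat. strict_mono \<sigma> \<and> (\<forall>a b. a \<le> b \<longrightarrow> h (\<sigma> a) \<le> h (\<sigma> b))"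
proof -
  obtain \<sigma> :: "nat \<Rightarrow> nat" where sm: "strict_mono \<sigma>" and ms: "monoseq (\<lambda>n. h (\<sigma> n))"
    using seq_monosub by blast
  show ?thesis
  proof (cases "\<forall>m n. m \<le> n \<longrightarrow> h (\<sigma> m) \<le> h (\<sigma> n)")
    case True then show ?thesis using sm by blast
  next
    case False
    then have dec: "\<forall>m n. m \<le> n \<longrightarrow> h (\<sigma> n) \<le> h (\<sigma> m)" using ms unfolding monoseq_def by blast
    define v where "v = (LEAST v. \<exists>k. h (\<sigma> k) = v)"
    have "\<exists>k. h (\<sigma> k) = v" unfolding v_def by (rule LeastI_ex) blast
    then obtain k0 where k0: "h (\<sigma> k0) = v" by blast
    have v_le: "v \<le> h (\<sigma> k)" for k unfolding v_def by (rule Least_le) blast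
    have const: "h (\<sigma> (k + k0)) = v" for k
      using dec[rule_format, of k0 "k + k0"] v_le[of "k + k0"] k0 by simp
    have "strict_mono (\<lambda>k. \<sigma> (k + k0))" using sm unfolding strict_mono_def by simp
    then show ?thesis using const by (intro exI[of _ "\<lambda>k. \<sigma> (k + k0)"]) simp
  qed
qed

lemma dickson_subseq:
  fixes x :: "nat \<Rightarrow> nat list"
  assumes "\<And>k. length (x k) = L"
  shows "\<exists>\<sigma>::nat\<Rightarrow>nat. strict_mono \<sigma> \<and> (\<forall>a b. a \<le> b \<longrightarrow> list_all2 (\<le>) (x (\<sigma> a)) (x (\<sigma> b)))"
  using assms
proof (induction L arbitrary: x)
  case 0
  then show ?case by (intro exI[of _ id]) (simp add: strict_mono_def)
next
  case (Suc L)
  have x: "x k = hd (x k) # tl (x k)" for k using Suc.prems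
    by (metis Zero_not_Suc list.collapse list.size(3))
  obtain \<sigma>1 :: "nat \<Rightarrow> nat" where s1: "strict_mono \<sigma>1"
    and m1: "\<forall>a b. a \<le> b \<longrightarrow> list_all2 (\<le>) (tl (x (\<sigma>1 a))) (tl (x (\<sigma>1 b)))"
    using Suc.IH[of "\<lambda>k. tl (x k)"] Suc.prems by auto
  obtain \<sigma>2 :: "nat \<Rightarrow> nat" where s2: "strict_mono \<sigma>2"
    and m2: "\<forall>a b. a \<le> b \<longrightarrow> hd (x (\<sigma>1 (\<sigma>2 a))) \<le> hd (x (\<sigma>1 (\<sigma>2 b)))"
    using nat_seq_incseq_subseq[of "\<lambda>k. hd (x (\<sigma>1 k))"] by blast
  have "list_all2 (\<le>) (x (\<sigma>1 (\<sigma>2 a))) (x (\<sigma>1 (\<sigma>2 b)))" if "a \<le> b" for a b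
  proof -
    have "\<sigma>2 a \<le> \<sigma>2 b" using s2 that by (simp add: strict_mono_less_eq)
    then show ?thesis using m1 m2 that x[of "\<sigma>1 (\<sigma>2 a)"] x[of "\<sigma>1 (\<sigma>2 b)"]
      by (metis list_all2_Cons)
  qed
  moreover have "strict_mono (\<lambda>a. \<sigma>1 (\<sigma>2 a))" using s1 s2 by (simp add: strict_mono_def)
  ultimately show ?case by blast
qed

section \<open>Leading keys of spaces of coefficient vectors\<close>

definition supp :: "('a \<Rightarrow> 'k::zero) \<Rightarrow> 'a set" where
  "supp c = {d. c d \<noteq> 0}"

definition lead_key :: "('a::linorder \<Rightarrow> 'k::zero) \<Rightarrow> 'a" where
  "lead_key c = Max (supp c)"

definition lead_keys :: "('a::linorder \<Rightarrow> 'k::zero) set \<Rightarrow> 'a set" where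
  "lead_keys P = lead_key ` {c\<in>P. c \<noteq> (\<lambda>_. 0)}"

definition coeff_subspace :: "('a \<Rightarrow> 'k::field) set \<Rightarrow> bool" where
  "coeff_subspace P \<longleftrightarrow> (\<lambda>_. 0) \<in> P \<and> (\<forall>c\<in>P. \<forall>b\<in>P. \<forall>a. (\<lambda>x. c x + a * b x) \<in> P)"

lemma coeff_subspace_zero: "coeff_subspace P \<Longrightarrow> (\<lambda>_. 0) \<in> P"
  unfolding coeff_subspace_def by blast

lemma coeff_subspace_lin: "coeff_subspace P \<Longrightarrow> c \<in> P \<Longrightarrow> b \<in> P \<Longrightarrow> (\<lambda>x. c x + a * b x) \<in> P"
  unfolding coeff_subspace_def by blast

lemma supp_eq_empty_iff: "supp c = {} \<longleftrightarrow> c = (\<lambda>_. 0)"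
  unfolding supp_def by auto

lemma supp_lin_subset:
  fixes b c :: "'a \<Rightarrow> 'k::field"
  shows "supp (\<lambda>x. c x + a * b x) \<subseteq> supp c \<union> supp b"
  unfolding supp_def by auto

lemma lead_key_in_supp: "finite (supp c) \<Longrightarrow> c \<noteq> (\<lambda>_. 0) \<Longrightarrow> lead_key c \<in> supp c"
  unfolding lead_key_def using supp_eq_empty_iff Max_in by blast

lemma le_lead_key: "finite (supp c) \<Longrightarrow> d \<in> supp c \<Longrightarrow> d \<le> lead_key c"
  unfolding lead_key_def by simp

lemma lead_keysI: "c \<in> P \<Longrightarrow> c \<noteq> (\<lambda>_. 0) \<Longrightarrow> lead_key c = d \<Longrightarrow> d \<in> lead_keys P"
  unfolding lead_keys_def by blast

lemma lead_keysE:
  assumes "d \<in> lead_keys P"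
  obtains c where "c \<in> P" "c \<noteq> (\<lambda>_. 0)" "lead_key c = d"
  using assms unfolding lead_keys_def by blast

lemma lead_key_cancel:
  fixes b c :: "'a::linorder \<Rightarrow> 'k::field"
  assumes fc: "finite (supp c)" and fb: "finite (supp b)"
    and b0: "b \<noteq> (\<lambda>_. 0)" and c0: "c \<noteq> (\<lambda>_. 0)" and lead: "lead_key b = lead_key c"
  defines "c' \<equiv> \<lambda>x. c x + (- (c (lead_key c) / b (lead_key c))) * b x"
  assumes c'0: "c' \<noteq> (\<lambda>_. 0)"
  shows "lead_key c' < lead_key c"
proof -
  have sub: "supp c' \<subseteq> supp c \<union> supp b" unfolding c'_def by (rule supp_lin_subset)
  then have "finite (supp c')" using fb fc finite_subset by blast
  then have lin: "lead_key c' \<in> supp c'" using c'0 by (rule lead_key_in_supp)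
  then have "lead_key c' \<le> lead_key c"
    using sub le_lead_key[OF fc] le_lead_key[OF fb] lead by auto
  moreover have "b (lead_key c) \<noteq> 0"
    using lead_key_in_supp[OF fb b0] lead unfolding supp_def by simp
  then have "lead_key c' \<noteq> lead_key c" using lin unfolding supp_def c'_def by auto
  ultimately show ?thesis by simp
qed

text \<open>Gaussian elimination along leading keys.\<close>

lemma coeff_subspace_subset_if_lead_keys_subset:
  fixes P Q :: "('a::wellorder \<Rightarrow> 'k::field) set"
  assumes P: "coeff_subspace P" and Q: "coeff_subspace Q" and "P \<subseteq> Q"
    and fin: "\<And>c. c \<in> Q \<Longrightarrow> finite (supp c)" and "lead_keys Q \<subseteq> lead_keys P"
  shows "Q \<subseteq> P"
proof
  fix c assume "c \<in> Q"
  then show "c \<in> P"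
  proof (induction "lead_key c" arbitrary: c rule: less_induct)
    case less
    show ?case
    proof (cases "c = (\<lambda>_. 0)")
      case True then show ?thesis using coeff_subspace_zero[OF P] by simp
    next
      case c0: False
      have "lead_key c \<in> lead_keys P"
        using lead_keysI[OF less.prems c0 HOL.refl] assms(5) by blast
      then obtain b where b: "b \<in> P" "b \<noteq> (\<lambda>_. 0)" "lead_key b = lead_key c"
        by (rule lead_keysE)
      define a where "a = c (lead_key c) / b (lead_key c)"
      define c' where "c' = (\<lambda>x. c x + (- a) * b x)"
      have "b \<in> Q" using b \<open>P \<subseteq> Q\<close> by blast
      then have c'Q: "c' \<in> Q" unfolding c'_def using less.prems coeff_subspace_lin[OF Q] by blast
      have "c' \<in> P"
      proof (cases "c' = (\<lambda>_. 0)")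
        case True then show ?thesis using coeff_subspace_zero[OF P] by simp
      next
        case False
        then have "lead_key c' < lead_key c"
          unfolding c'_def a_def
          using lead_key_cancel fin[OF less.prems] fin[OF \<open>b \<in> Q\<close>] b c0 by blast
        then show ?thesis using less.hyps c'Q by blast
      qed
      then have "(\<lambda>x. c' x + a * b x) \<in> P" using b(1) by (rule coeff_subspace_lin[OF P])
      then show ?thesis unfolding c'_def by simp
    qed
  qed
qed

lemma coeff_chain_stabilises:
  fixes P :: "nat \<Rightarrow> (nat list \<Rightarrow> 'k::field) set"
  assumes sub: "\<And>k. coeff_subspace (P k)"
    and fin: "\<And>k c. c \<in> P k \<Longrightarrow> finite (supp c) \<and> supp c \<subseteq> K"
    and len: "\<And>d. d \<in> K \<Longrightarrow> length d = L"
    and mono: "\<And>k. P k \<subseteq> P (Suc k)"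
    and up: "\<And>k d d'. d \<in> lead_keys (P k) \<Longrightarrow> d' \<in> K \<Longrightarrow> list_all2 (\<le>) d d' \<Longrightarrow> d' \<in> lead_keys (P k)"
  shows "\<exists>k. P (Suc k) \<subseteq> P k"
proof (rule ccontr)
  assume "\<nexists>k. P (Suc k) \<subseteq> P k"
  then have "\<not> lead_keys (P (Suc k)) \<subseteq> lead_keys (P k)" for k
    using coeff_subspace_subset_if_lead_keys_subset[OF sub sub mono] fin by blast
  then have "\<forall>k. \<exists>d. d \<in> lead_keys (P (Suc k)) \<and> d \<notin> lead_keys (P k)" by blast
  then obtain x where x: "\<And>k. x k \<in> lead_keys (P (Suc k)) \<and> x k \<notin> lead_keys (P k)"
    by metis
  have lead_keys_K: "lead_keys (P k) \<subseteq> K" for k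
    using lead_key_in_supp fin by (fastforce elim: lead_keysE)
  have lead_keys_mono: "a \<le> b \<Longrightarrow> lead_keys (P a) \<subseteq> lead_keys (P b)" for a b
    using lift_Suc_mono_le[of P, OF mono] unfolding lead_keys_def by blast
  obtain \<sigma> :: "nat \<Rightarrow> nat" where sm: "strict_mono \<sigma>"
    and le: "\<forall>a b. a \<le> b \<longrightarrow> list_all2 (\<le>) (x (\<sigma> a)) (x (\<sigma> b))"
    using dickson_subseq[of x L] x lead_keys_K len by blast
  have "\<sigma> 0 < \<sigma> 1" using sm by (simp add: strict_mono_def)
  then have "x (\<sigma> 0) \<in> lead_keys (P (\<sigma> 1))" using x lead_keys_mono[of "Suc (\<sigma> 0)" "\<sigma> 1"] by auto
  then have "x (\<sigma> 1) \<in> lead_keys (P (\<sigma> 1))" using up x lead_keys_K le by blast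
  then show False using x by blast
qed

section \<open>A spanning set of the generated subalgebra\<close>

definition generator :: "nat \<Rightarrow> nat \<Rightarrow> 'k::field mla" where
  "generator r k = abs_mla (if k < r then Gen k else Var (k - r))"

fun ad_monomial :: "nat \<Rightarrow> nat \<Rightarrow> nat list \<Rightarrow> 'k::field mla \<Rightarrow> 'k mla" where
  "ad_monomial r k [] z = z"
| "ad_monomial r k (a # es) z = (mbr (generator r k) ^^ a) (ad_monomial r (Suc k) es z)"

text \<open>A key of length \<open>m + 6\<close> names either the generator \<open>g\<^sub>i\<close> or the monomial
  \<open>ad(g\<^sub>0)\<^bsup>e\<^sub>0\<^esup> \<cdots> ad(g\<^sub>m\<^sub>-\<^sub>1)\<^bsup>e\<^sub>m\<^sub>-\<^sub>1\<^esup> [g\<^sub>i, g\<^sub>j]\<close>. The entries \<open>i, m - i\<close> and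
  \<open>j, m - j\<close> make keys of different shape or with different \<open>i, j\<close> incomparable in the
  componentwise order, and the leading entries put every bracket key below every generator
  key in the length-lexicographic order.\<close>

definition gen_key :: "nat \<Rightarrow> nat \<Rightarrow> nat list" where
  "gen_key m i = [1, 0, i, m - i, 0, m] @ replicate m 0"

definition br_key :: "nat \<Rightarrow> nat \<Rightarrow> nat \<Rightarrow> nat list \<Rightarrow> nat list" where
  "br_key m i j e = [0, 1, i, m - i, j, m - j] @ e"

definition br_key_set :: "nat \<Rightarrow> nat list set" where
  "br_key_set m = {br_key m i j e | i j e. i < m \<and> j < m \<and> length e = m}"

definition key_set :: "nat \<Rightarrow> nat list set" where
  "key_set m = {gen_key m i | i. i < m} \<union> br_key_set m"

definition key_val :: "nat \<Rightarrow> nat list \<Rightarrow> 'k::field mla" where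
  "key_val r d = (if d ! 0 = 1 then generator r (d ! 2)
     else ad_monomial r 0 (drop 6 d) (mbr (generator r (d ! 2)) (generator r (d ! 4))))"

definition combination :: "nat \<Rightarrow> (nat list \<Rightarrow> 'k::field) \<Rightarrow> 'k mla" where
  "combination r c = (\<Sum>d\<in>supp c. mscale (c d) (key_val r d))"

definition valid_coeffs :: "nat \<Rightarrow> (nat list \<Rightarrow> 'k::field) \<Rightarrow> bool" where
  "valid_coeffs m c \<longleftrightarrow> finite (supp c) \<and> supp c \<subseteq> key_set m"

definition key_span :: "nat \<Rightarrow> nat \<Rightarrow> 'k::field mla set" where
  "key_span r m = {combination r c | c. valid_coeffs m c}"

lemma key_val_gen_key [simp]: "key_val r (gen_key m i) = generator r i"
  unfolding key_val_def gen_key_def by simp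

lemma key_val_br_key [simp]:
  "key_val r (br_key m i j e) = ad_monomial r 0 e (mbr (generator r i) (generator r j))"
  unfolding key_val_def br_key_def by simp

lemma length_key: "d \<in> key_set m \<Longrightarrow> length d = m + 6"
  unfolding key_set_def br_key_set_def gen_key_def br_key_def by auto

lemma br_key_in_br_key_set: "i < m \<Longrightarrow> j < m \<Longrightarrow> length e = m \<Longrightarrow> br_key m i j e \<in> br_key_set m"
  unfolding br_key_set_def by (intro CollectI exI[of _ i] exI[of _ j] exI[of _ e]) simp

lemma br_key_set_subset: "br_key_set m \<subseteq> key_set m"
  unfolding key_set_def by blast

lemma br_key_less_gen_key: "length e = m \<Longrightarrow> br_key m i j e < gen_key m i'"
  unfolding br_key_def gen_key_def by (simp add: Cons_less_Cons)

lemma key_set_cases: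
  assumes "d \<in> key_set m"
  obtains (gen) i where "i < m" "d = gen_key m i"
    | (br) i j e where "i < m" "j < m" "length e = m" "d = br_key m i j e"
  using assms unfolding key_set_def br_key_set_def by blast

lemma combination_eq_sum:
  "finite A \<Longrightarrow> supp c \<subseteq> A \<Longrightarrow> combination r c = (\<Sum>d\<in>A. mscale (c d) (key_val r d))"
  unfolding combination_def by (rule sum.mono_neutral_left) (auto simp: supp_def)

lemma combination_lin:
  assumes "finite (supp c)" "finite (supp b)"
  shows "combination r (\<lambda>x. c x + a * b x) = combination r c + mscale a (combination r b)"
proof -
  let ?A = "supp c \<union> supp b"
  have fin: "finite ?A" using assms by simp
  have "combination r (\<lambda>x. c x + a * b x) = (\<Sum>d\<in>?A. mscale (c d + a * b d) (key_val r d))"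
    using combination_eq_sum[OF fin supp_lin_subset] by simp
  also have "\<dots> = (\<Sum>d\<in>?A. mscale (c d) (key_val r d)) + mscale a (\<Sum>d\<in>?A. mscale (b d) (key_val r d))"
    by (simp add: mla.scale_left_distrib mla.scale_sum_right sum.distrib)
  also have "\<dots> = combination r c + mscale a (combination r b)"
    using combination_eq_sum[OF fin, of c r] combination_eq_sum[OF fin, of b r] by auto
  finally show ?thesis .
qed

lemma combination_zero [simp]: "combination r (\<lambda>_. 0) = 0"
  unfolding combination_def supp_def by simp

lemma valid_coeffs_zero: "valid_coeffs m (\<lambda>_. 0)"
  unfolding valid_coeffs_def supp_def by simp

lemma valid_coeffs_lin:
  assumes "valid_coeffs m c" "valid_coeffs m b"
  shows "valid_coeffs m (\<lambda>x. c x + a * b x)"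
proof -
  have "supp (\<lambda>x. c x + a * b x) \<subseteq> supp c \<union> supp b" by (rule supp_lin_subset)
  with assms show ?thesis unfolding valid_coeffs_def by (auto intro: finite_subset)
qed

lemma subspace_key_span: "mla.subspace (key_span r m)"
  unfolding mla.subspace_def
proof (intro conjI ballI allI)
  show "0 \<in> key_span r m"
    unfolding key_span_def using combination_zero valid_coeffs_zero by (intro CollectI exI conjI) auto
  have lin: "x + mscale a y \<in> key_span r m" if xy: "x \<in> key_span r m" "y \<in> key_span r m" for x y a
  proof -
    obtain c b where c: "valid_coeffs m c" "x = combination r c"
      and b: "valid_coeffs m b" "y = combination r b"
      using xy unfolding key_span_def by blast
    then have "x + mscale a y = combination r (\<lambda>z. c z + a * b z)"
      using combination_lin[of c b r a] unfolding valid_coeffs_def by simp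
    then show ?thesis unfolding key_span_def using valid_coeffs_lin c b by blast
  qed
  show "x + y \<in> key_span r m" if "x \<in> key_span r m" "y \<in> key_span r m" for x y
    using lin[OF that, of 1] by simp
  show "mscale a y \<in> key_span r m" if "y \<in> key_span r m" for a y
    using lin[OF \<open>0 \<in> key_span r m\<close> that] by simp
qed

lemma key_val_in_key_span:
  assumes d: "d \<in> key_set m"
  shows "(key_val r d :: 'k::field mla) \<in> key_span r m"
proof -
  define c where "c = (\<lambda>x. if x = d then (1::'k) else 0)"
  have supp_c: "supp c = {d}" unfolding c_def supp_def by auto
  then have "valid_coeffs m c" using d unfolding valid_coeffs_def by simp
  moreover have "key_val r d = combination r c"
    unfolding combination_def supp_c by (simp add: c_def)
  ultimately show ?thesis unfolding key_span_def by (intro CollectI exI conjI)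
qed

lemma is_bracket_ad_pow: "is_bracket z \<Longrightarrow> is_bracket ((mbr x ^^ a) z)"
  by (cases a) auto

lemma is_bracket_ad_monomial: "is_bracket z \<Longrightarrow> is_bracket (ad_monomial r k es z)"
  by (induction es arbitrary: k) (auto intro: is_bracket_ad_pow)

lemma ad_pow_mbr_commute: "is_bracket w \<Longrightarrow> (mbr y ^^ a) (mbr x w) = mbr x ((mbr y ^^ a) w)"
  by (induction a) (auto simp: mbr_commute_on_bracket is_bracket_ad_pow)

lemma ad_monomial_replicate_0: "ad_monomial r k (replicate n 0) z = z"
  by (induction n arbitrary: k) auto

lemma ad_monomial_raise:
  assumes "is_bracket z" "k \<le> l" "l < k + length es"
  shows "ad_monomial r k (es[l - k := Suc (es ! (l - k))]) z = mbr (generator r l) (ad_monomial r k es z)"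
  using assms(2,3)
proof (induction es arbitrary: k)
  case Nil then show ?case by simp
next
  case (Cons a es)
  show ?case
  proof (cases "l = k")
    case True then show ?thesis by simp
  next
    case False
    then have "l - k = Suc (l - Suc k)" "Suc k \<le> l" using Cons.prems by auto
    then show ?thesis
      using Cons.IH[of "Suc k"] Cons.prems
      by (simp add: ad_pow_mbr_commute is_bracket_ad_monomial assms(1))
  qed
qed

definition raise_key :: "nat \<Rightarrow> nat list \<Rightarrow> nat list" where
  "raise_key l d = d[6 + l := Suc (d ! (6 + l))]"

lemma raise_br_key:
  "l < length e \<Longrightarrow> raise_key l (br_key m i j e) = br_key m i j (e[l := Suc (e ! l)])"
  unfolding raise_key_def br_key_def by (simp add: list_update_append nth_append)

lemma raise_br_key_set:
  assumes "d \<in> br_key_set m" "l < m"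
  shows "raise_key l d \<in> br_key_set m"
proof -
  obtain i j e where ije: "i < m" "j < m" "length e = m" "d = br_key m i j e"
    using assms(1) unfolding br_key_set_def by blast
  then have "raise_key l d = br_key m i j (e[l := Suc (e ! l)])"
    using raise_br_key assms(2) by simp
  then show ?thesis using ije by (simp add: br_key_in_br_key_set)
qed

lemma key_val_raise_key:
  assumes "d \<in> br_key_set m" "l < m"
  shows "key_val r (raise_key l d) = mbr (generator r l) (key_val r d)"
proof -
  obtain i j e where "l < length e" "d = br_key m i j e"
    using assms unfolding br_key_set_def by blast
  then show ?thesis
    using ad_monomial_raise[of "mbr (generator r i) (generator r j)" 0 l e r]
    by (simp add: raise_br_key)
qed

lemma mbr_generator_key_val_in_key_span:
  assumes "i < m" "d \<in> key_set m"
  shows "(mbr (generator r i) (key_val r d) :: 'k::field mla) \<in> key_span r m"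
  using assms(2)
proof (cases rule: key_set_cases)
  case (gen j)
  then have "mbr (generator r i) (key_val r d) = (key_val r (br_key m i j (replicate m 0)) :: 'k mla)"
    by (simp add: ad_monomial_replicate_0)
  moreover have "br_key m i j (replicate m 0) \<in> key_set m"
    using br_key_in_br_key_set[OF assms(1) gen(1), of "replicate m 0"] br_key_set_subset by auto
  ultimately show ?thesis using key_val_in_key_span[of "br_key m i j (replicate m 0)" m r] by simp
next
  case (br a b e)
  then have d: "d \<in> br_key_set m" by (simp add: br_key_in_br_key_set)
  then have "raise_key i d \<in> key_set m" using raise_br_key_set assms(1) br_key_set_subset by blast
  moreover have "key_val r (raise_key i d) = (mbr (generator r i) (key_val r d) :: 'k mla)"
    by (rule key_val_raise_key[OF d assms(1)])
  ultimately show ?thesis using key_val_in_key_span by metis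
qed

lemma mbr_key_vals_in_key_span:
  assumes d: "d \<in> key_set m" and d': "d' \<in> key_set m"
  shows "(mbr (key_val r d) (key_val r d') :: 'k::field mla) \<in> key_span r m"
  using d
proof (cases rule: key_set_cases)
  case (gen i)
  then show ?thesis using mbr_generator_key_val_in_key_span d' by simp
next
  case (br i j e)
  from d' show ?thesis
  proof (cases rule: key_set_cases)
    case (gen i')
    then have "mbr (key_val r d) (key_val r d') = - (mbr (generator r i') (key_val r d) :: 'k mla)"
      by (simp add: mbr_antisym[of "key_val r d"])
    then show ?thesis
      using mla.subspace_neg[OF subspace_key_span mbr_generator_key_val_in_key_span[OF gen(1) d]]
      by simp
  next
    case (br i' j' e')
    have "is_bracket (key_val r d :: 'k mla)" "is_bracket (key_val r d' :: 'k mla)"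
      using \<open>d = br_key m i j e\<close> br(4) by (simp_all add: is_bracket_ad_monomial)
    then show ?thesis
      unfolding is_bracket_def using mla.subspace_0[OF subspace_key_span] by (auto simp: mbr_mbr_mbr)
  qed
qed

lemma mbr_in_key_span:
  assumes "x \<in> key_span r m" "y \<in> key_span r m"
  shows "(mbr x y :: 'k::field mla) \<in> key_span r m"
proof -
  obtain c b where c: "valid_coeffs m c" "x = combination r c"
    and b: "valid_coeffs m b" "y = combination r b"
    using assms unfolding key_span_def by blast
  have "mbr x y = (\<Sum>d'\<in>supp b. mscale (b d') (\<Sum>d\<in>supp c. mscale (c d) (mbr (key_val r d) (key_val r d'))))"
    unfolding c b combination_def by (simp add: mbr_sum_left mbr_sum_right mbr_scale_left mbr_scale_right)
  also have "\<dots> \<in> key_span r m"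
    using c b subspace_key_span unfolding valid_coeffs_def
    by (intro mla.subspace_sum mla.subspace_scale mbr_key_vals_in_key_span) auto
  finally show ?thesis .
qed

inductive_set gen_subalg :: "nat \<Rightarrow> nat \<Rightarrow> 'k::field mla set" for r m where
  generator: "k < m \<Longrightarrow> generator r k \<in> gen_subalg r m"
| zero: "0 \<in> gen_subalg r m"
| add: "x \<in> gen_subalg r m \<Longrightarrow> y \<in> gen_subalg r m \<Longrightarrow> x + y \<in> gen_subalg r m"
| scale: "x \<in> gen_subalg r m \<Longrightarrow> mscale a x \<in> gen_subalg r m"
| mbr: "x \<in> gen_subalg r m \<Longrightarrow> y \<in> gen_subalg r m \<Longrightarrow> mbr x y \<in> gen_subalg r m"

lemma gen_subalg_subset_key_span: "gen_subalg r m \<subseteq> key_span r m"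
proof
  fix x assume "x \<in> gen_subalg r m"
  then show "x \<in> key_span r m"
  proof (induction rule: gen_subalg.induct)
    case (generator k)
    then have "gen_key m k \<in> key_set m" unfolding key_set_def by blast
    then show ?case using key_val_in_key_span[of "gen_key m k" m r] by simp
  qed (auto intro: mla.subspace_0[OF subspace_key_span] mla.subspace_add[OF subspace_key_span]
      mla.subspace_scale[OF subspace_key_span] mbr_in_key_span)
qed

section \<open>Ascending chains of ideals\<close>

inductive_set gen_ideal :: "nat \<Rightarrow> nat \<Rightarrow> 'k::field mla set \<Rightarrow> 'k mla set" for r m F where
  base: "x \<in> F \<Longrightarrow> x \<in> gen_ideal r m F"
| zero: "0 \<in> gen_ideal r m F"
| add: "x \<in> gen_ideal r m F \<Longrightarrow> y \<in> gen_ideal r m F \<Longrightarrow> x + y \<in> gen_ideal r m F"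
| scale: "x \<in> gen_ideal r m F \<Longrightarrow> mscale a x \<in> gen_ideal r m F"
| mbr: "x \<in> gen_ideal r m F \<Longrightarrow> y \<in> gen_subalg r m \<Longrightarrow> mbr y x \<in> gen_ideal r m F"

lemma gen_ideal_mono: "x \<in> gen_ideal r m F \<Longrightarrow> F \<subseteq> G \<Longrightarrow> x \<in> gen_ideal r m G"
  by (induction rule: gen_ideal.induct) (auto intro: gen_ideal.intros)

lemma msubst_gen_ideal: "x \<in> gen_ideal r m F \<Longrightarrow> (\<And>y. y \<in> F \<Longrightarrow> msubst p y = 0) \<Longrightarrow> msubst p x = 0"
  by (induction rule: gen_ideal.induct) (auto simp: mla.scale_zero_right)

definition ideal_coeffs :: "nat \<Rightarrow> nat \<Rightarrow> 'k::field mla set \<Rightarrow> (nat list \<Rightarrow> 'k) set" where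
  "ideal_coeffs r m F = {c. valid_coeffs m c \<and> combination r c \<in> gen_ideal r m F}"

lemma coeff_subspace_ideal_coeffs: "coeff_subspace (ideal_coeffs r m F)"
proof -
  have "(\<lambda>x. c x + a * b x) \<in> ideal_coeffs r m F"
    if cb: "c \<in> ideal_coeffs r m F" "b \<in> ideal_coeffs r m F" for c b a
  proof -
    have "combination r (\<lambda>x. c x + a * b x) = combination r c + mscale a (combination r b)"
      using cb combination_lin unfolding ideal_coeffs_def valid_coeffs_def by blast
    then show ?thesis
      using cb valid_coeffs_lin unfolding ideal_coeffs_def by (auto intro: gen_ideal.add gen_ideal.scale)
  qed
  moreover have "(\<lambda>_. 0) \<in> ideal_coeffs r m F"
    unfolding ideal_coeffs_def by (simp add: valid_coeffs_zero gen_ideal.zero)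
  ultimately show ?thesis unfolding coeff_subspace_def by blast
qed

lemma lead_keys_ideal_coeffs_subset: "lead_keys (ideal_coeffs r m F) \<subseteq> key_set m"
proof
  fix d assume "d \<in> lead_keys (ideal_coeffs r m F)"
  then obtain c where "c \<in> ideal_coeffs r m F" "c \<noteq> (\<lambda>_. 0)" "lead_key c = d"
    by (rule lead_keysE)
  then show "d \<in> key_set m"
    using lead_key_in_supp unfolding ideal_coeffs_def valid_coeffs_def by blast
qed

text \<open>Bracketing with \<open>g\<^sub>l\<close> acts on coefficient vectors supported on bracket keys by moving
  every coefficient from \<open>d\<close> to \<open>raise_key l d\<close>.\<close>

definition shift_coeffs :: "nat \<Rightarrow> (nat list \<Rightarrow> 'k::zero) \<Rightarrow> nat list \<Rightarrow> 'k" where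
  "shift_coeffs l c d =
     (if 6 + l < length d \<and> 0 < d ! (6 + l) then c (d[6 + l := d ! (6 + l) - 1]) else 0)"

lemma shift_coeffs_raise_key: "6 + l < length d \<Longrightarrow> shift_coeffs l c (raise_key l d) = c d"
  unfolding shift_coeffs_def raise_key_def by simp

lemma inj_on_raise_key: "inj_on (raise_key l) {d. 6 + l < length d}"
proof (rule inj_onI)
  fix x y assume "x \<in> {d. 6 + l < length d}" "y \<in> {d. 6 + l < length d}"
    and "raise_key l x = raise_key l y"
  then have "(raise_key l x)[6 + l := raise_key l x ! (6 + l) - 1]
    = (raise_key l y)[6 + l := raise_key l y ! (6 + l) - 1]" by simp
  then show "x = y" using \<open>x \<in> _\<close> \<open>y \<in> _\<close> unfolding raise_key_def by simp
qed

lemma supp_shift_coeffs: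
  assumes "\<forall>d\<in>supp c. 6 + l < length d"
  shows "supp (shift_coeffs l c) = raise_key l ` supp c"
proof (intro equalityI subsetI)
  fix d assume "d \<in> supp (shift_coeffs l c)"
  then have d: "6 + l < length d" "0 < d ! (6 + l)" "c (d[6 + l := d ! (6 + l) - 1]) \<noteq> 0"
    unfolding supp_def shift_coeffs_def by (auto split: if_splits)
  define d' where "d' = d[6 + l := d ! (6 + l) - 1]"
  have "raise_key l d' = d" using d(1,2) unfolding raise_key_def d'_def by simp
  moreover have "d' \<in> supp c" using d(3) unfolding supp_def d'_def by simp
  ultimately show "d \<in> raise_key l ` supp c" by blast
next
  fix d assume "d \<in> raise_key l ` supp c"
  then obtain d0 where "d0 \<in> supp c" "d = raise_key l d0" by blast
  then show "d \<in> supp (shift_coeffs l c)"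
    using assms shift_coeffs_raise_key[of l d0 c] unfolding supp_def by simp
qed

lemma list_update_Suc_strict_mono: "(x::nat list) < y \<Longrightarrow> x[q := Suc (x ! q)] < y[q := Suc (y ! q)]"
proof (induction x arbitrary: y q)
  case Nil
  then obtain b ys where "y = b # ys" by (cases y) auto
  then show ?case by (cases q) auto
next
  case (Cons a x)
  then obtain b ys where y: "y = b # ys" by (cases y) auto
  with Cons.prems have "length x < length ys \<or> length x = length ys \<and> (a < b \<or> a = b \<and> x < ys)"
    by (simp add: Cons_less_Cons)
  then show ?case using Cons.IH y by (cases q) (auto simp: Cons_less_Cons)
qed

lemma mono_raise_key: "mono (raise_key l)"
  unfolding mono_def raise_key_def using list_update_Suc_strict_mono by (metis order_le_less)

lemma lead_key_shift_coeffs: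
  assumes "finite (supp c)" "c \<noteq> (\<lambda>_. 0)" "\<forall>d\<in>supp c. 6 + l < length d"
  shows "lead_key (shift_coeffs l c) = raise_key l (lead_key c)"
proof -
  have "supp c \<noteq> {}" using assms(2) supp_eq_empty_iff by blast
  then have "raise_key l (Max (supp c)) = Max (raise_key l ` supp c)"
    using mono_Max_commute[OF mono_raise_key] assms(1) by blast
  then show ?thesis unfolding lead_key_def using supp_shift_coeffs[OF assms(3)] by simp
qed

lemma combination_shift_coeffs:
  assumes "supp c \<subseteq> br_key_set m" "l < m"
  shows "combination r (shift_coeffs l c) = mbr (generator r l) (combination r c)"
proof -
  have len: "\<forall>d\<in>supp c. 6 + l < length d"
    using assms length_key br_key_set_subset by fastforce
  then have inj: "inj_on (raise_key l) (supp c)"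
    by (intro inj_on_subset[OF inj_on_raise_key]) blast
  have "combination r (shift_coeffs l c)
      = (\<Sum>d\<in>supp c. mscale (shift_coeffs l c (raise_key l d)) (key_val r (raise_key l d)))"
    unfolding combination_def supp_shift_coeffs[OF len] sum.reindex[OF inj] by simp
  also have "\<dots> = (\<Sum>d\<in>supp c. mscale (c d) (mbr (generator r l) (key_val r d)))"
    using assms len by (intro sum.cong) (auto simp: shift_coeffs_raise_key key_val_raise_key)
  also have "\<dots> = mbr (generator r l) (combination r c)"
    unfolding combination_def by (simp add: mbr_sum_right mbr_scale_right)
  finally show ?thesis .
qed

lemma supp_subset_br_key_set:
  assumes "valid_coeffs m c" "c \<noteq> (\<lambda>_. 0)" "lead_key c = br_key m i j e" "length e = m"
  shows "supp c \<subseteq> br_key_set m"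
proof
  fix d assume d: "d \<in> supp c"
  have "d \<le> lead_key c" "d \<in> key_set m"
    using le_lead_key[OF _ d] assms(1) d unfolding valid_coeffs_def by auto
  then have "d \<le> br_key m i j e" "d \<in> key_set m" using assms(3) by simp_all
  then show "d \<in> br_key_set m"
    using br_key_less_gen_key[OF assms(4)] unfolding key_set_def by (auto simp: not_le[symmetric])
qed

lemma lead_keys_raise:
  assumes d: "br_key m i j e \<in> lead_keys (ideal_coeffs r m F)" and "l < m" "length e = m"
  shows "br_key m i j (e[l := Suc (e ! l)]) \<in> lead_keys (ideal_coeffs r m F)"
proof -
  obtain c where c: "c \<in> ideal_coeffs r m F" "c \<noteq> (\<lambda>_. 0)" "lead_key c = br_key m i j e"
    using d by (rule lead_keysE)
  have valid: "valid_coeffs m c" using c(1) unfolding ideal_coeffs_def by blast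
  have supp: "supp c \<subseteq> br_key_set m" using supp_subset_br_key_set[OF valid c(2,3)] assms(3) .
  have len: "\<forall>d\<in>supp c. 6 + l < length d"
    using supp assms(2) length_key br_key_set_subset by fastforce
  have "mbr (generator r l) (combination r c) \<in> gen_ideal r m F"
    using c(1) assms(2) unfolding ideal_coeffs_def by (auto intro: gen_ideal.mbr gen_subalg.generator)
  moreover have "valid_coeffs m (shift_coeffs l c)"
    using valid supp raise_br_key_set[OF _ assms(2)] br_key_set_subset
    unfolding valid_coeffs_def supp_shift_coeffs[OF len] by blast
  ultimately have "shift_coeffs l c \<in> ideal_coeffs r m F"
    unfolding ideal_coeffs_def by (simp add: combination_shift_coeffs[OF supp assms(2)])
  moreover have "shift_coeffs l c \<noteq> (\<lambda>_. 0)"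
    using c(2) supp_eq_empty_iff[of c] supp_eq_empty_iff[of "shift_coeffs l c"]
    unfolding supp_shift_coeffs[OF len] by simp
  moreover have "lead_key (shift_coeffs l c) = br_key m i j (e[l := Suc (e ! l)])"
    using lead_key_shift_coeffs[OF _ c(2) len] valid c(3) raise_br_key assms(2,3)
    unfolding valid_coeffs_def by simp
  ultimately show ?thesis by (rule lead_keysI)
qed

lemma list_all2_le_induct:
  assumes "list_all2 (\<le>) e e'" "P e"
    and step: "\<And>f l. P f \<Longrightarrow> list_all2 (\<le>) e f \<Longrightarrow> l < length f \<Longrightarrow> P (f[l := Suc (f ! l)])"
  shows "P (e' :: nat list)"
  using assms(1)
proof (induction "sum_list e'" arbitrary: e' rule: less_induct)
  case less
  have len: "length e' = length e" using less.prems list_all2_lengthD by fastforce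
  show ?case
  proof (cases "e' = e")
    case True then show ?thesis using assms(2) by simp
  next
    case False
    then obtain l where "l < length e" "e ! l \<noteq> e' ! l" using len by (auto simp: list_eq_iff_nth_eq)
    then have l: "l < length e" "e ! l < e' ! l" using list_all2_nthD[OF less.prems] by fastforce+
    define f where "f = e'[l := e' ! l - 1]"
    have f: "list_all2 (\<le>) e f"
      using less.prems l len unfolding f_def by (auto simp: list_all2_conv_all_nth nth_list_update)
    have "e' ! l \<le> sum_list e'" using elem_le_sum_list[of l e'] l len by simp
    then have "sum_list f < sum_list e'" unfolding f_def using sum_list_update[of l e'] l len by simp
    then have "P f" using less.hyps f by blast
    moreover have "l < length f" using l len unfolding f_def by simp
    ultimately have "P (f[l := Suc (f ! l)])" using step f by blast
    moreover have "f[l := Suc (f ! l)] = e'" unfolding f_def using l len by auto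
    ultimately show ?thesis by simp
  qed
qed

lemma key_le_cases:
  assumes d: "d \<in> key_set m" and d': "d' \<in> key_set m" and le: "list_all2 (\<le>) d d'"
  shows "d = d' \<or> (\<exists>i j e e'. d = br_key m i j e \<and> d' = br_key m i j e' \<and> length e = m
                       \<and> list_all2 (\<le>) e e')"
proof -
  have entry: "d ! k \<le> d' ! k" if "k < 6" for k
    using list_all2_nthD[OF le] length_key[OF d] that by simp
  have same: "a = b" if "a \<le> b" "m - a \<le> m - b" "b < m" for a b :: nat
    using that by linarith
  show ?thesis
    using d
  proof (cases rule: key_set_cases)
    case (gen i)
    note d_eq = \<open>d = gen_key m i\<close>
    show ?thesis
      using d'
    proof (cases rule: key_set_cases)
      case (gen i')
      then have "i = i'" using entry[of 2] entry[of 3] same[of i i'] d_eq by (simp add: gen_key_def)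
      then show ?thesis using gen d_eq by simp
    next
      case br
      then show ?thesis using entry[of 0] d_eq by (simp add: gen_key_def br_key_def)
    qed
  next
    case (br i j e)
    note d_eq = \<open>d = br_key m i j e\<close>
    show ?thesis
      using d'
    proof (cases rule: key_set_cases)
      case gen
      then show ?thesis using entry[of 1] d_eq by (simp add: gen_key_def br_key_def)
    next
      case (br i' j' e')
      then have "i = i'" "j = j'"
        using entry[of 2] entry[of 3] entry[of 4] entry[of 5] same[of i i'] same[of j j'] d_eq
        by (simp_all add: br_key_def)
      moreover have "list_all2 (\<le>) e e'"
        using list_all2_dropI[OF le, of 6] d_eq br by (simp add: br_key_def)
      ultimately show ?thesis using d_eq br \<open>length e = m\<close> by blast
    qed
  qed
qed

lemma lead_keys_upward_closed:
  assumes "d \<in> lead_keys (ideal_coeffs r m F)" "d' \<in> key_set m" "list_all2 (\<le>) d d'"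
  shows "d' \<in> lead_keys (ideal_coeffs r m F)"
proof -
  have "d \<in> key_set m" using assms(1) lead_keys_ideal_coeffs_subset by blast
  then consider "d = d'"
    | i j e e' where "d = br_key m i j e" "d' = br_key m i j e'" "length e = m" "list_all2 (\<le>) e e'"
    using key_le_cases assms(2,3) by blast
  then show ?thesis
  proof cases
    case 2
    have "br_key m i j e' \<in> lead_keys (ideal_coeffs r m F)"
      using \<open>list_all2 (\<le>) e e'\<close>
    proof (rule list_all2_le_induct)
      show "br_key m i j e \<in> lead_keys (ideal_coeffs r m F)" using assms(1) 2(1) by simp
      fix f l assume f: "br_key m i j f \<in> lead_keys (ideal_coeffs r m F)" "list_all2 (\<le>) e f"
        and "l < length f"
      moreover have "length f = m" using f(2) 2(3) list_all2_lengthD by fastforce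
      ultimately show "br_key m i j (f[l := Suc (f ! l)]) \<in> lead_keys (ideal_coeffs r m F)"
        using lead_keys_raise[of m i j f r F l] by simp
    qed
    then show ?thesis using 2(2) by simp
  qed (use assms(1) in simp)
qed

lemma gen_ideal_chain_stabilises:
  fixes F :: "nat \<Rightarrow> 'k::field mla set"
  assumes "\<And>k. F k \<subseteq> F (Suc k)"
  shows "\<exists>k. gen_ideal r m (F (Suc k)) \<inter> key_span r m \<subseteq> gen_ideal r m (F k)"
proof -
  have "\<exists>k. ideal_coeffs r m (F (Suc k)) \<subseteq> ideal_coeffs r m (F k)"
  proof (rule coeff_chain_stabilises[where K = "key_set m" and L = "m + 6"])
    show "ideal_coeffs r m (F k) \<subseteq> ideal_coeffs r m (F (Suc k))" for k
      using assms gen_ideal_mono unfolding ideal_coeffs_def by blast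
    show "finite (supp c) \<and> supp c \<subseteq> key_set m" if "c \<in> ideal_coeffs r m (F k)" for k c
      using that unfolding ideal_coeffs_def valid_coeffs_def by blast
  qed (simp_all add: coeff_subspace_ideal_coeffs length_key lead_keys_upward_closed)
  then obtain k where k: "ideal_coeffs r m (F (Suc k)) \<subseteq> ideal_coeffs r m (F k)" by blast
  have "x \<in> gen_ideal r m (F k)"
    if x: "x \<in> gen_ideal r m (F (Suc k))" "x \<in> key_span r m" for x
  proof -
    obtain c where "valid_coeffs m c" "x = combination r c" using x(2) unfolding key_span_def by blast
    then show ?thesis using x(1) k unfolding ideal_coeffs_def by blast
  qed
  then show ?thesis by blast
qed

lemma gen_ideal_finite_basis:
  fixes G :: "'k::field mla set"
  assumes "G \<subseteq> gen_subalg r m"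
  shows "\<exists>F. finite F \<and> F \<subseteq> G \<and> G \<subseteq> gen_ideal r m F"
proof (rule ccontr)
  assume "\<nexists>F. finite F \<and> F \<subseteq> G \<and> G \<subseteq> gen_ideal r m F"
  then have "\<forall>F. \<exists>s. finite F \<and> F \<subseteq> G \<longrightarrow> s \<in> G \<and> s \<notin> gen_ideal r m F" by blast
  from choice[OF this] obtain pick
    where pick: "\<And>F. finite F \<Longrightarrow> F \<subseteq> G \<Longrightarrow> pick F \<in> G \<and> pick F \<notin> gen_ideal r m F"
    by blast
  define Fs where "Fs = rec_nat {} (\<lambda>_ F. insert (pick F) F)"
  have Fs_Suc: "Fs (Suc k) = insert (pick (Fs k)) (Fs k)" for k unfolding Fs_def by simp
  have Fs: "finite (Fs k) \<and> Fs k \<subseteq> G" for k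
    by (induction k) (auto simp: Fs_def pick)
  obtain k where k: "gen_ideal r m (Fs (Suc k)) \<inter> key_span r m \<subseteq> gen_ideal r m (Fs k)"
    using gen_ideal_chain_stabilises[of Fs r m] Fs_Suc by blast
  have new: "pick (Fs k) \<in> G" "pick (Fs k) \<notin> gen_ideal r m (Fs k)" using pick Fs by blast+
  have "pick (Fs k) \<in> gen_ideal r m (Fs (Suc k))" by (rule gen_ideal.base) (simp add: Fs_Suc)
  moreover have "pick (Fs k) \<in> key_span r m"
    using new(1) assms gen_subalg_subset_key_span by blast
  ultimately show False using k new(2) by blast
qed

lemma FrX_elem_in_gen_subalg:
  assumes "FrX_elem r n t"
  shows "(abs_mla t :: 'k::field mla) \<in> gen_subalg r (r + n)"
  using assms
proof (induction t)
  case (Gen i)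
  then have "i < r + n" "(abs_mla (Gen i) :: 'k mla) = generator r i"
    unfolding FrX_elem_def generator_def by auto
  then show ?case by (simp add: gen_subalg.generator)
next
  case (Var j)
  then have "r + j < r + n" "(abs_mla (Var j) :: 'k mla) = generator r (r + j)"
    unfolding FrX_elem_def generator_def by auto
  then show ?case by (metis gen_subalg.generator)
qed (auto simp: FrX_elem_def zero_mla.abs_eq[symmetric] plus_mla.abs_eq[symmetric]
    mscale.abs_eq[symmetric] mbr.abs_eq[symmetric] intro: gen_subalg.intros)

lemma Vset_eq_if_subset_gen_ideal:
  assumes "F \<subseteq> S" and "(abs_mla ` S :: 'k::field mla set) \<subseteq> gen_ideal r m (abs_mla ` F)"
  shows "Vset r n S = Vset r n F"
proof
  show "Vset r n S \<subseteq> Vset r n F" using assms(1) unfolding Vset_def by blast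
next
  show "Vset r n F \<subseteq> Vset r n S"
  proof
    fix p assume p: "p \<in> Vset r n F"
    have "msubst p (abs_mla s) = 0" if "s \<in> S" for s
    proof (rule msubst_gen_ideal)
      show "abs_mla s \<in> gen_ideal r m (abs_mla ` F)" using assms(2) that by blast
      show "msubst p y = 0" if "y \<in> abs_mla ` F" for y
        using that p unfolding Vset_def by (auto simp: msubst_abs_eq_0_iff)
    qed
    then show "p \<in> Vset r n S" using p unfolding Vset_def by (auto simp: msubst_abs_eq_0_iff)
  qed
qed

theorem lemma2p4:
  fixes r n :: nat and S :: "'k::field lterm set"
  assumes "r > 0"
    and "\<forall>f\<in>S. FrX_elem r n f"
  shows "\<exists>S0. S0 \<subseteq> S \<and> finite S0 \<and> Vset r n S = Vset r n S0"
proof -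
  have "(abs_mla ` S :: 'k mla set) \<subseteq> gen_subalg r (r + n)"
  proof
    fix x :: "'k mla" assume "x \<in> abs_mla ` S"
    then obtain f where "f \<in> S" "x = abs_mla f" by blast
    then show "x \<in> gen_subalg r (r + n)" using assms(2) FrX_elem_in_gen_subalg[of r n f] by simp
  qed
  then have "\<exists>G. finite G \<and> G \<subseteq> abs_mla ` S \<and> abs_mla ` S \<subseteq> gen_ideal r (r + n) G"
    by (rule gen_ideal_finite_basis)
  then obtain G where G: "finite G" "G \<subseteq> abs_mla ` S" "abs_mla ` S \<subseteq> gen_ideal r (r + n) G"
    by blast
  then obtain S0 where S0: "S0 \<subseteq> S" "finite S0" "G = abs_mla ` S0"
    using finite_subset_image[OF G(1,2)] by blast
  have "Vset r n S = Vset r n S0"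
    using Vset_eq_if_subset_gen_ideal[of S0 S r "r + n" n] S0 G(3) by simp
  then show ?thesis using S0 by blast
qed

end
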